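(* If $G=(U,E)$ is a binary tree, then there exists a category system $\mathcal S\subset 2^U$ such that $(G,\mathcal S)$ is shattered and internally connected and $\operatorname{memdim}(\mathcal S)=O(\operatorname{diam}(G)^2)$.
   Context: A binary tree here is a tree that can be rooted so that every vertex has at most two children. For $u\in U$ let $\mathrm{cat}(u)=\{C\in\mathcal S: u\in C\}$; $\operatorname{memdim}(\mathcal S)=\max_{u\in U}|\mathrm{cat}(u)|$. $\operatorname{diam}(G)$ is the maximum shortest-path distance between two vertices of $G$. $N(s)$ is the neighbor set of $s$. $(G,\mathcal S)$ is internally connected if for every $C\in\mathcal S$ the subgraph of $G$ induced by $C$ is connected. $(G,\mathcal S)$ is shattered if for all $s\neq t$ in $U$ there exist $u\in N(s)$ and $C\in\mathcal S$ with $u,t\in C$ and $s\notin C$ (possibly $u=t$). *)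

theory Defs
  imports Main
begin

text \<open>Simple finite graphs G = (U, E): E is a set of 2-element subsets of U.
  Vertices are natural numbers (every finite graph is isomorphic to such a graph).\<close>

definition graph :: "nat set \<Rightarrow> nat set set \<Rightarrow> bool" where
  "graph U E \<longleftrightarrow> finite U \<and> (\<forall>e\<in>E. \<exists>u v. e = {u, v} \<and> u \<noteq> v \<and> u \<in> U \<and> v \<in> U)"

definition adj :: "nat set set \<Rightarrow> nat \<Rightarrow> nat \<Rightarrow> bool" where
  "adj E u v \<longleftrightarrow> u \<noteq> v \<and> {u, v} \<in> E"

definition nbrs :: "nat set set \<Rightarrow> nat \<Rightarrow> nat set" where
  "nbrs E s = {u. adj E s u}"

definition walk_in :: "nat set set \<Rightarrow> nat set \<Rightarrow> nat list \<Rightarrow> bool" where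
  "walk_in E W xs \<longleftrightarrow> xs \<noteq> [] \<and> set xs \<subseteq> W \<and>
     (\<forall>i. Suc i < length xs \<longrightarrow> adj E (xs ! i) (xs ! Suc i))"

definition connected_in :: "nat set set \<Rightarrow> nat set \<Rightarrow> bool" where
  "connected_in E W \<longleftrightarrow> (\<forall>x\<in>W. \<forall>y\<in>W. \<exists>xs. walk_in E W xs \<and> hd xs = x \<and> last xs = y)"

definition has_cycle :: "nat set \<Rightarrow> nat set set \<Rightarrow> bool" where
  "has_cycle U E \<longleftrightarrow> (\<exists>xs. walk_in E U xs \<and> distinct xs \<and> length xs \<ge> 3 \<and> adj E (last xs) (hd xs))"

definition tree :: "nat set \<Rightarrow> nat set set \<Rightarrow> bool" where
  "tree U E \<longleftrightarrow> graph U E \<and> U \<noteq> {} \<and> connected_in E U \<and> \<not> has_cycle U E"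

definition gdist :: "nat set \<Rightarrow> nat set set \<Rightarrow> nat \<Rightarrow> nat \<Rightarrow> nat" where
  "gdist U E x y = (LEAST n. \<exists>xs. walk_in E U xs \<and> hd xs = x \<and> last xs = y \<and> length xs = Suc n)"

definition diam :: "nat set \<Rightarrow> nat set set \<Rightarrow> nat" where
  "diam U E = Max {gdist U E u v | u v. u \<in> U \<and> v \<in> U}"

text \<open>Binary tree: a tree that can be rooted at some r so that every vertex has at most two
  children (children of v = neighbours w of v farther from r than v).\<close>
definition binary_tree :: "nat set \<Rightarrow> nat set set \<Rightarrow> bool" where
  "binary_tree U E \<longleftrightarrow> tree U E \<and>
     (\<exists>r\<in>U. \<forall>v\<in>U. card {w \<in> U. adj E v w \<and> gdist U E r w = Suc (gdist U E r v)} \<le> 2)"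

definition cat :: "nat set set \<Rightarrow> nat \<Rightarrow> nat set set" where
  "cat S u = {C \<in> S. u \<in> C}"

definition memdim :: "nat set \<Rightarrow> nat set set \<Rightarrow> nat" where
  "memdim U S = Max ((\<lambda>u. card (cat S u)) ` U)"

definition internally_connected :: "nat set set \<Rightarrow> nat set set \<Rightarrow> bool" where
  "internally_connected E S \<longleftrightarrow> (\<forall>C\<in>S. connected_in E C)"

definition shattered :: "nat set \<Rightarrow> nat set set \<Rightarrow> nat set set \<Rightarrow> bool" where
  "shattered U E S \<longleftrightarrow> (\<forall>s\<in>U. \<forall>t\<in>U. s \<noteq> t \<longrightarrow>
     (\<exists>u\<in>nbrs E s. \<exists>C\<in>S. u \<in> C \<and> t \<in> C \<and> s \<notin> C))"

end

theory Submission
  imports Defs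
begin

text \<open>Root the tree at r and let every other vertex point to a neighbour one level closer to r.
  The categories are the subtrees T(c) of non-root vertices c together with the sets
  T(parent c) minus the part of T(c) at depth \<ge> d, for d \<le> diam. If s is an ancestor of t,
  the subtree of the child of s towards t separates them; otherwise, with c the ancestor of s just
  below the lowest common ancestor, cutting T(c) at the depth of s keeps t and the parent of s
  but removes s. A vertex u lies in T(c) only for the \<le> diam + 1 ancestors c of u, and in a cut set
  only if parent c is an ancestor of u, which leaves 2 (diam + 1)^2 choices of (c, d).\<close>

lemma adj_sym: "adj E u v \<longleftrightarrow> adj E v u"
  by (auto simp: adj_def insert_commute)

lemma walk_in_singleton [simp]: "walk_in E W [x] \<longleftrightarrow> x \<in> W"
  by (auto simp: walk_in_def)

lemma walk_in_Cons_Cons: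
  "walk_in E W (x # y # zs) \<longleftrightarrow> x \<in> W \<and> adj E x y \<and> walk_in E W (y # zs)"
proof -
  have "(\<forall>i. Suc i < length (x # y # zs) \<longrightarrow> adj E ((x # y # zs) ! i) ((x # y # zs) ! Suc i))
    \<longleftrightarrow> adj E x y \<and> (\<forall>i. Suc i < length (y # zs) \<longrightarrow> adj E ((y # zs) ! i) ((y # zs) ! Suc i))"
    by (auto simp: less_Suc_eq_0_disj)
  then show ?thesis
    by (auto simp: walk_in_def)
qed

lemma walk_in_append_iff:
  assumes "xs \<noteq> []" "ys \<noteq> []"
  shows "walk_in E W (xs @ ys) \<longleftrightarrow> walk_in E W xs \<and> walk_in E W ys \<and> adj E (last xs) (hd ys)"
  using assms(1)
proof (induction xs rule: list_nonempty_induct)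
  case (single x)
  then show ?case
    using assms(2) by (cases ys) (auto simp: walk_in_Cons_Cons)
next
  case (cons x xs)
  then show ?case
    by (cases xs) (auto simp: walk_in_Cons_Cons)
qed

lemma walk_in_rev: "walk_in E W xs \<Longrightarrow> walk_in E W (rev xs)"
proof (induction xs)
  case (Cons x xs)
  show ?case
  proof (cases xs)
    case (Cons y ys)
    then have "walk_in E W (rev xs)" "x \<in> W" "adj E (last (rev xs)) x"
      using Cons.IH Cons.prems by (auto simp: walk_in_Cons_Cons adj_sym)
    then show ?thesis
      using Cons by (subst rev.simps, subst walk_in_append_iff) auto
  qed (use Cons.prems in simp)
qed (simp add: walk_in_def)

lemma walk_in_join:
  assumes "walk_in E W xs" "walk_in E W ys" "last xs = hd ys"
  shows "walk_in E W (xs @ tl ys)"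
proof (cases "tl ys")
  case (Cons z zs)
  then have "ys = hd ys # z # zs"
    using assms(2) by (cases ys) (auto simp: walk_in_def)
  then have "walk_in E W (z # zs)" "adj E (last xs) z"
    using assms(2,3) by (metis walk_in_Cons_Cons)+
  then show ?thesis
    using assms(1) Cons by (subst walk_in_append_iff) (auto simp: walk_in_def)
qed (use assms(1) in simp)

lemma connected_in_if_walks_to:
  assumes "\<And>v. v \<in> C \<Longrightarrow> \<exists>xs. walk_in E C xs \<and> hd xs = v \<and> last xs = x"
  shows "connected_in E C"
  unfolding connected_in_def
proof (intro ballI)
  fix a b assume "a \<in> C" "b \<in> C"
  then obtain xa xb where xa: "walk_in E C xa" "hd xa = a" "last xa = x"
    and xb: "walk_in E C xb" "hd xb = b" "last xb = x"
    using assms by meson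
  have "walk_in E C (xa @ tl (rev xb))"
    using xa xb by (intro walk_in_join walk_in_rev) (auto simp: walk_in_def hd_rev)
  moreover have "hd (xa @ tl (rev xb)) = a"
    using xa by (auto simp: walk_in_def)
  moreover have "last (xa @ tl (rev xb)) = b"
  proof (cases "tl (rev xb) = []")
    case True
    then have "xb = [x]"
      using xb by (cases "rev xb") (auto simp: walk_in_def)
    then show ?thesis
      using xa xb True by simp
  next
    case False
    then show ?thesis
      using xb by (auto simp: last_tl last_rev)
  qed
  ultimately show "\<exists>xs. walk_in E C xs \<and> hd xs = a \<and> last xs = b"
    by blast
qed

locale rooted_graph =
  fixes U :: "nat set" and E :: "nat set set" and r :: nat
  assumes finite_U: "finite U" and connected_U: "connected_in E U" and root_in_U: "r \<in> U"
begin

abbreviation depth :: "nat \<Rightarrow> nat" where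
  "depth v \<equiv> gdist U E r v"

lemma shortest_walk_from_root:
  assumes "v \<in> U"
  obtains xs where "walk_in E U xs" "hd xs = r" "last xs = v" "length xs = Suc (depth v)"
proof -
  obtain xs where xs: "walk_in E U xs" "hd xs = r" "last xs = v"
    using connected_U assms root_in_U unfolding connected_in_def by blast
  then have "\<exists>n xs. walk_in E U xs \<and> hd xs = r \<and> last xs = v \<and> length xs = Suc n"
    by (intro exI[of _ "length xs - 1"] exI[of _ xs]) (auto simp: walk_in_def)
  from LeastI_ex[OF this] show ?thesis
    using that unfolding gdist_def by blast
qed

lemma depth_le_walk:
  assumes "walk_in E U xs" "hd xs = r" "last xs = v"
  shows "depth v \<le> length xs - 1"
proof -
  have "length xs = Suc (length xs - 1)"
    using assms(1) by (simp add: walk_in_def)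
  then show ?thesis
    unfolding gdist_def using assms by (intro Least_le) blast
qed

lemma depth_root [simp]: "depth r = 0"
  using depth_le_walk[of "[r]"] root_in_U by simp

lemma depth_eq_0_iff: "v \<in> U \<Longrightarrow> depth v = 0 \<longleftrightarrow> v = r"
  by (metis Suc_length_conv depth_root last_ConsL length_0_conv list.sel(1)
      shortest_walk_from_root)

lemma depth_le_diam: "v \<in> U \<Longrightarrow> depth v \<le> diam U E"
  unfolding diam_def using root_in_U finite_U by (intro Max_ge) (auto intro: finite_image_set2)

lemma depth_adj_le:
  assumes "p \<in> U" "v \<in> U" "adj E p v"
  shows "depth v \<le> Suc (depth p)"
proof -
  obtain xs where xs: "walk_in E U xs" "hd xs = r" "last xs = p" "length xs = Suc (depth p)"
    using shortest_walk_from_root assms(1) by blast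
  then have "xs \<noteq> []"
    by (simp add: walk_in_def)
  then have "walk_in E U (xs @ [v])" "hd (xs @ [v]) = r"
    using assms xs by (auto simp: walk_in_append_iff)
  then show ?thesis
    using depth_le_walk[of "xs @ [v]" v] xs by simp
qed

text \<open>The second to last vertex of a shortest walk from the root is a neighbour one level up.\<close>
lemma parent_exists:
  assumes "v \<in> U" "v \<noteq> r"
  shows "\<exists>p. p \<in> U \<and> adj E v p \<and> Suc (depth p) = depth v"
proof -
  obtain xs where xs: "walk_in E U xs" "hd xs = r" "last xs = v" "length xs = Suc (depth v)"
    using shortest_walk_from_root assms(1) by blast
  define ys where "ys = butlast xs"
  have "xs = ys @ [v]"
    unfolding ys_def using xs by (metis append_butlast_last_id list.size(3) nat.distinct(1))
  moreover have "ys \<noteq> []"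
    using assms xs \<open>xs = ys @ [v]\<close> by auto
  ultimately have ys: "walk_in E U ys" "adj E (last ys) v" "hd ys = r" "length ys = depth v"
    using xs by (auto simp: walk_in_append_iff)
  then have "last ys \<in> U"
    using \<open>ys \<noteq> []\<close> by (auto simp: walk_in_def)
  moreover have "depth (last ys) \<le> depth v - 1"
    using depth_le_walk[OF ys(1,3)] ys(4) by simp
  moreover have "depth v \<le> Suc (depth (last ys))"
    using depth_adj_le[OF _ assms(1) ys(2)] \<open>last ys \<in> U\<close> by simp
  ultimately show ?thesis
    using ys(2) assms by (metis Suc_pred' adj_sym depth_eq_0_iff le_antisym not_gr0 not_less_eq_eq)
qed

definition parent :: "nat \<Rightarrow> nat" where
  "parent v = (if v = r then r else SOME p. p \<in> U \<and> adj E v p \<and> Suc (depth p) = depth v)"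

lemma parent_root [simp]: "parent r = r"
  by (simp add: parent_def)

lemma parent_nonroot:
  assumes "v \<in> U" "v \<noteq> r"
  shows "parent v \<in> U" "adj E v (parent v)" "Suc (depth (parent v)) = depth v"
  using someI_ex[OF parent_exists[OF assms]] assms by (simp_all add: parent_def)

lemma funpow_parent_root [simp]: "(parent ^^ k) r = r"
  by (induction k) auto

lemma parent_in_U: "v \<in> U \<Longrightarrow> parent v \<in> U"
  using parent_nonroot(1) by (cases "v = r") auto

lemma funpow_parent_in_U: "v \<in> U \<Longrightarrow> (parent ^^ k) v \<in> U"
  by (induction k) (auto simp: parent_in_U)

lemma depth_funpow_parent: "v \<in> U \<Longrightarrow> depth ((parent ^^ k) v) = depth v - k"
proof (induction k)
  case (Suc k)
  let ?y = "(parent ^^ k) v"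
  have "?y \<in> U"
    using Suc.prems by (rule funpow_parent_in_U)
  then show ?case
    using Suc parent_nonroot(3)[of ?y] by (cases "?y = r") auto
qed simp

lemma funpow_parent_depth: "v \<in> U \<Longrightarrow> (parent ^^ depth v) v = r"
  using depth_funpow_parent[of v "depth v"] depth_eq_0_iff funpow_parent_in_U by simp

lemma funpow_parent_le_depth:
  assumes "v \<in> U" "(parent ^^ k) v = x"
  obtains i where "i \<le> depth v" "(parent ^^ i) v = x"
proof (cases "k \<le> depth v")
  case False
  have "(parent ^^ k) v = (parent ^^ (k - depth v)) ((parent ^^ depth v) v)"
    using False by (metis funpow_add le_add_diff_inverse2 nat_le_linear o_apply)
  also have "\<dots> = r"
    using funpow_parent_depth[OF assms(1)] by simp
  finally show ?thesis
    using that funpow_parent_depth[OF assms(1)] assms(2) by auto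
qed (use assms that in blast)

lemma depth_parent_le: "v \<in> U \<Longrightarrow> depth (parent v) \<le> depth v"
  using depth_funpow_parent[of v 1] by simp

definition subtree :: "nat \<Rightarrow> nat set" where
  "subtree x = {v \<in> U. \<exists>k. (parent ^^ k) v = x}"

lemma subtree_subset: "subtree x \<subseteq> U"
  by (auto simp: subtree_def)

lemma self_in_subtree: "x \<in> U \<Longrightarrow> x \<in> subtree x"
  unfolding subtree_def by (auto intro: exI[of _ 0])

lemma in_subtree_root: "v \<in> U \<Longrightarrow> v \<in> subtree r"
  unfolding subtree_def using funpow_parent_depth by blast

lemma funpow_Suc_parent: "(parent ^^ Suc k) v = (parent ^^ k) (parent v)"
  by (simp only: funpow_Suc_right o_apply)

lemma parent_in_subtree:
  assumes "v \<in> subtree x" "v \<noteq> x"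
  shows "parent v \<in> subtree x"
proof -
  obtain k where k: "v \<in> U" "(parent ^^ k) v = x"
    using assms(1) by (auto simp: subtree_def)
  with assms(2) obtain j where "k = Suc j"
    by (cases k) auto
  with k have "(parent ^^ j) (parent v) = x"
    by (metis funpow_Suc_parent)
  then show ?thesis
    using k(1) parent_in_U unfolding subtree_def by blast
qed

lemma parent_in_subtree_parent:
  assumes "v \<in> subtree x"
  shows "parent v \<in> subtree (parent x)"
proof -
  obtain k where "v \<in> U" "(parent ^^ k) v = x"
    using assms by (auto simp: subtree_def)
  then have "(parent ^^ k) (parent v) = parent x"
    by (metis funpow_Suc_parent funpow.simps(2) o_apply)
  then show ?thesis
    using \<open>v \<in> U\<close> by (auto simp: subtree_def parent_in_U)
qed

lemma child_in_subtree:
  assumes "v \<in> U" "parent v \<in> subtree x"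
  shows "v \<in> subtree x"
proof -
  obtain k where "(parent ^^ k) (parent v) = x"
    using assms(2) by (auto simp: subtree_def)
  then have "(parent ^^ Suc k) v = x"
    by (simp only: funpow_Suc_parent)
  then show ?thesis
    using assms(1) unfolding subtree_def by blast
qed

lemma depth_le_if_in_subtree:
  assumes "v \<in> subtree x"
  shows "depth x \<le> depth v"
proof -
  obtain k where "v \<in> U" "(parent ^^ k) v = x"
    using assms by (auto simp: subtree_def)
  then show ?thesis
    using depth_funpow_parent[of v k] by simp
qed

lemma walk_up_to:
  assumes closed: "\<And>v. v \<in> C \<Longrightarrow> v \<noteq> x \<Longrightarrow> parent v \<in> C"
    and "C \<subseteq> U" "v \<in> C" "(parent ^^ k) v = x"
  shows "\<exists>xs. walk_in E C xs \<and> hd xs = v \<and> last xs = x"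
  using assms(3,4)
proof (induction k arbitrary: v)
  case 0
  then show ?case
    by (intro exI[of _ "[v]"]) simp
next
  case (Suc k)
  show ?case
  proof (cases "v = x")
    case False
    then have "parent v \<in> C" "(parent ^^ k) (parent v) = x"
      using closed Suc.prems by (simp_all only: funpow_Suc_parent)
    then obtain xs where xs: "walk_in E C xs" "hd xs = parent v" "last xs = x"
      using Suc.IH by blast
    show ?thesis
    proof (cases "v = r")
      case False
      then have "walk_in E C ([v] @ xs)"
        using xs Suc.prems(1) parent_nonroot(2)[of v] \<open>C \<subseteq> U\<close>
        by (subst walk_in_append_iff) (auto simp: walk_in_def)
      moreover have "xs \<noteq> []"
        using xs(1) by (simp add: walk_in_def)
      ultimately show ?thesis
        using xs by (intro exI[of _ "[v] @ xs"]) simp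
    qed (use xs in auto)
  qed (intro exI[of _ "[v]"], use Suc.prems in simp)
qed

lemma connected_in_if_closed_under_parent:
  assumes "C \<subseteq> subtree x" "\<And>v. v \<in> C \<Longrightarrow> v \<noteq> x \<Longrightarrow> parent v \<in> C"
  shows "connected_in E C"
proof (rule connected_in_if_walks_to)
  fix v assume "v \<in> C"
  then obtain k where "(parent ^^ k) v = x"
    using assms(1) by (auto simp: subtree_def)
  then show "\<exists>xs. walk_in E C xs \<and> hd xs = v \<and> last xs = x"
    using walk_up_to[OF assms(2)] assms(1) subtree_subset \<open>v \<in> C\<close> by blast
qed

lemma connected_subtree: "connected_in E (subtree x)"
  by (rule connected_in_if_closed_under_parent) (auto intro: parent_in_subtree)

definition subtree_cut :: "nat \<Rightarrow> nat \<Rightarrow> nat set" where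
  "subtree_cut c d = {v \<in> subtree (parent c). v \<in> subtree c \<longrightarrow> depth v < d}"

lemma connected_subtree_cut: "connected_in E (subtree_cut c d)"
proof (rule connected_in_if_closed_under_parent)
  show "subtree_cut c d \<subseteq> subtree (parent c)"
    by (auto simp: subtree_cut_def)
  fix v assume v: "v \<in> subtree_cut c d" "v \<noteq> parent c"
  then have "v \<in> U"
    using subtree_subset by (auto simp: subtree_cut_def)
  then show "parent v \<in> subtree_cut c d"
    using v parent_in_subtree child_in_subtree depth_parent_le[of v]
    by (fastforce simp: subtree_cut_def)
qed

definition categories :: "nat set set" where
  "categories = {subtree c | c. c \<in> U \<and> c \<noteq> r}
     \<union> {subtree_cut c d | c d. c \<in> U \<and> c \<noteq> r \<and> d \<le> diam U E}"

lemma categories_subset_Pow: "categories \<subseteq> Pow U"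
  using subtree_subset by (auto simp: categories_def subtree_cut_def)

lemma internally_connected_categories: "internally_connected E categories"
  by (auto simp: internally_connected_def categories_def connected_subtree connected_subtree_cut)

lemma child_towards_descendant:
  assumes "t \<in> subtree s" "t \<noteq> s"
  obtains c where "c \<in> U" "c \<noteq> r" "parent c = s" "t \<in> subtree c"
proof -
  obtain k where "t \<in> U" "(parent ^^ k) t = s"
    using assms(1) by (auto simp: subtree_def)
  then have "\<exists>c. c \<in> U \<and> c \<noteq> r \<and> parent c = s \<and> t \<in> subtree c"
    using assms(2)
  proof (induction k arbitrary: t)
    case (Suc k)
    show ?case
    proof (cases "parent t = s")
      case True
      then have "t \<noteq> r"
        using Suc.prems(3) by auto
      then show ?thesis
        using True Suc.prems(1) self_in_subtree by blast
    next
      case False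
      have "(parent ^^ k) (parent t) = s"
        using Suc.prems(2) by (simp only: funpow_Suc_parent)
      then obtain c where "c \<in> U" "c \<noteq> r" "parent c = s" "parent t \<in> subtree c"
        using Suc.IH[of "parent t"] Suc.prems(1) False parent_in_U by blast
      then show ?thesis
        using Suc.prems(1) child_in_subtree by blast
    qed
  qed simp
  with that show ?thesis
    by blast
qed

lemma branch_separating:
  assumes "s \<in> U" "t \<in> U" "t \<notin> subtree s"
  obtains c where "c \<in> U" "c \<noteq> r" "s \<in> subtree c" "t \<notin> subtree c" "t \<in> subtree (parent c)"
proof -
  have "t \<in> subtree ((parent ^^ depth s) s)"
    using assms(1,2) funpow_parent_depth in_subtree_root by simp
  then have "\<exists>c. c \<in> U \<and> c \<noteq> r \<and> s \<in> subtree c \<and> t \<notin> subtree c \<and> t \<in> subtree (parent c)"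
    using assms(1,3)
  proof (induction "depth s" arbitrary: s)
    case 0
    then show ?case
      by simp
  next
    case (Suc k)
    show ?case
    proof (cases "t \<in> subtree (parent s)")
      case True
      then have "s \<noteq> r"
        using Suc.prems(3) by auto
      then show ?thesis
        using True Suc.prems(2,3) self_in_subtree by blast
    next
      case False
      have "s \<noteq> r"
        using Suc.hyps(2) by force
      then have ps: "parent s \<in> U" "depth (parent s) = k"
        using Suc.prems(2) Suc.hyps(2) parent_nonroot[of s] by auto
      then have "t \<in> subtree ((parent ^^ depth (parent s)) (parent s))"
        using Suc.prems(1) Suc.hyps(2)[symmetric] by (simp only: funpow_Suc_parent)
      then obtain c where "c \<in> U" "c \<noteq> r" "parent s \<in> subtree c" "t \<notin> subtree c"
          "t \<in> subtree (parent c)"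
        using Suc.hyps(1)[of "parent s"] ps False by blast
      then show ?thesis
        using Suc.prems(2) child_in_subtree by blast
    qed
  qed
  with that show ?thesis
    by blast
qed

lemma shattered_categories: "shattered U E categories"
  unfolding shattered_def
proof (intro ballI impI)
  fix s t assume st: "s \<in> U" "t \<in> U" "s \<noteq> t"
  show "\<exists>u\<in>nbrs E s. \<exists>C\<in>categories. u \<in> C \<and> t \<in> C \<and> s \<notin> C"
  proof (cases "t \<in> subtree s")
    case True
    then obtain c where c: "c \<in> U" "c \<noteq> r" "parent c = s" "t \<in> subtree c"
      using child_towards_descendant st(3) by metis
    have "s \<notin> subtree c"
      using depth_le_if_in_subtree parent_nonroot(3)[OF c(1,2)] c(3) by fastforce
    moreover have "c \<in> nbrs E s"
      using parent_nonroot(2)[OF c(1,2)] c(3) by (simp add: nbrs_def adj_sym)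
    moreover have "subtree c \<in> categories"
      using c by (auto simp: categories_def)
    ultimately show ?thesis
      using c self_in_subtree by blast
  next
    case False
    then obtain c where c: "c \<in> U" "c \<noteq> r" "s \<in> subtree c" "t \<notin> subtree c"
        "t \<in> subtree (parent c)"
      using branch_separating st(1,2) by metis
    have "s \<noteq> r"
      using False in_subtree_root st(2) by blast
    let ?C = "subtree_cut c (depth s)"
    have "?C \<in> categories"
      using c depth_le_diam st(1) by (auto simp: categories_def)
    moreover have "s \<notin> ?C" "t \<in> ?C"
      using c by (auto simp: subtree_cut_def)
    moreover have "parent s \<in> ?C"
      using parent_nonroot(3)[OF st(1) \<open>s \<noteq> r\<close>] parent_in_subtree_parent[OF c(3)]
      by (auto simp: subtree_cut_def)
    moreover have "parent s \<in> nbrs E s"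
      using parent_nonroot(2)[OF st(1) \<open>s \<noteq> r\<close>] by (simp add: nbrs_def)
    ultimately show ?thesis
      by blast
  qed
qed

definition children :: "nat \<Rightarrow> nat set" where
  "children v = {w \<in> U. adj E v w \<and> depth w = Suc (depth v)}"

lemma in_children_parent: "c \<in> U \<Longrightarrow> c \<noteq> r \<Longrightarrow> c \<in> children (parent c)"
  using parent_nonroot[of c] by (simp add: children_def adj_sym)

lemma ancestor_within_diam:
  assumes "u \<in> subtree x"
  obtains i where "i \<le> diam U E" "(parent ^^ i) u = x"
proof -
  obtain k where "u \<in> U" "(parent ^^ k) u = x"
    using assms by (auto simp: subtree_def)
  then obtain i where "i \<le> depth u" "(parent ^^ i) u = x"
    by (rule funpow_parent_le_depth)
  then show ?thesis
    using that depth_le_diam[OF \<open>u \<in> U\<close>] le_trans by blast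
qed

lemma cat_categories_subset:
  defines "D \<equiv> diam U E"
  shows "cat categories u \<subseteq> (\<lambda>i. subtree ((parent ^^ i) u)) ` {..D}
    \<union> (\<lambda>(i, c, d). subtree_cut c d) ` (SIGMA i:{..D}. children ((parent ^^ i) u) \<times> {..D})"
proof
  fix C assume "C \<in> cat categories u"
  then have u: "u \<in> C" and "C \<in> categories"
    by (auto simp: cat_def)
  then consider c where "C = subtree c"
    | c d where "C = subtree_cut c d" "c \<in> U" "c \<noteq> r" "d \<le> D"
    by (auto simp: categories_def D_def)
  then show "C \<in> (\<lambda>i. subtree ((parent ^^ i) u)) ` {..D}
    \<union> (\<lambda>(i, c, d). subtree_cut c d) ` (SIGMA i:{..D}. children ((parent ^^ i) u) \<times> {..D})"
  proof cases
    case (1 c)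
    then obtain i where "i \<le> D" "(parent ^^ i) u = c"
      using u ancestor_within_diam unfolding D_def by metis
    then show ?thesis
      using 1 by auto
  next
    case (2 c d)
    then have "u \<in> subtree (parent c)"
      using u by (simp add: subtree_cut_def)
    then obtain i where "i \<le> D" "(parent ^^ i) u = parent c"
      using ancestor_within_diam unfolding D_def by metis
    then have "(i, c, d) \<in> (SIGMA i:{..D}. children ((parent ^^ i) u) \<times> {..D})"
      using 2 in_children_parent by auto
    then show ?thesis
      using 2 by force
  qed
qed

lemma card_cat_categories_le:
  assumes children_le: "\<And>v. v \<in> U \<Longrightarrow> card (children v) \<le> b"
    and "u \<in> U"
  defines "D \<equiv> diam U E"
  shows "card (cat categories u) \<le> (D + 1) * (1 + b * (D + 1))"
proof -
  let ?I = "SIGMA i:{..D}. children ((parent ^^ i) u) \<times> {..D}"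
  let ?F1 = "(\<lambda>i. subtree ((parent ^^ i) u)) ` {..D}"
  let ?F2 = "(\<lambda>(i, c, d). subtree_cut c d) ` ?I"
  have finite_children: "finite (children v)" for v
    using finite_U by (simp add: children_def)
  have "card ?I = (\<Sum>i\<le>D. card (children ((parent ^^ i) u)) * (D + 1))"
    using finite_children by (simp add: card_SigmaI card_cartesian_product)
  also have "\<dots> \<le> (\<Sum>i\<le>D. b * (D + 1))"
    using children_le funpow_parent_in_U[OF \<open>u \<in> U\<close>] by (intro sum_mono mult_le_mono1) auto
  finally have "card ?I \<le> (D + 1) * (b * (D + 1))"
    by simp
  moreover have "finite ?I"
    using finite_children by auto
  ultimately have "card ?F2 \<le> (D + 1) * (b * (D + 1))"
    using card_image_le[of ?I] le_trans by blast
  moreover have "card ?F1 \<le> D + 1"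
    using card_image_le[of "{..D}"] by simp
  ultimately have "card (?F1 \<union> ?F2) \<le> (D + 1) * (1 + b * (D + 1))"
    using card_Un_le[of ?F1 ?F2] by (simp add: distrib_left)
  moreover have "card (cat categories u) \<le> card (?F1 \<union> ?F2)"
    using cat_categories_subset finite_children unfolding D_def by (intro card_mono) auto
  ultimately show ?thesis
    by linarith
qed

lemma memdim_categories_le:
  assumes "\<And>v. v \<in> U \<Longrightarrow> card (children v) \<le> b"
  shows "memdim U categories \<le> 4 * (b + 1) * (diam U E)\<^sup>2"
proof -
  let ?D = "diam U E"
  have "card (cat categories u) \<le> 4 * (b + 1) * ?D\<^sup>2" if "u \<in> U" for u
  proof (cases "?D = 0")
    case True
    then have "categories = {}"
      using depth_le_diam depth_eq_0_iff by (fastforce simp: categories_def)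
    then show ?thesis
      by (simp add: cat_def)
  next
    case False
    have "b \<le> b * ?D"
      using False by simp
    moreover have "1 + b * (?D + 1) = b * ?D + b + 1" "(b + 1) * (2 * ?D) = 2 * (b * ?D) + 2 * ?D"
      by (simp_all add: algebra_simps)
    ultimately have "1 + b * (?D + 1) \<le> (b + 1) * (2 * ?D)"
      using False by linarith
    moreover have "?D + 1 \<le> 2 * ?D"
      using False by simp
    ultimately have "(?D + 1) * (1 + b * (?D + 1)) \<le> (2 * ?D) * ((b + 1) * (2 * ?D))"
      by (rule mult_le_mono[rotated])
    then show ?thesis
      using card_cat_categories_le[OF assms that] by (simp add: power2_eq_square algebra_simps)
  qed
  then show ?thesis
    unfolding memdim_def using finite_U root_in_U by (subst Max_le_iff) auto
qed

end

theorem lemma5: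
  "\<exists>c::nat. \<forall>(U::nat set) (E::nat set set). binary_tree U E \<longrightarrow>
     (\<exists>S. S \<subseteq> Pow U \<and> shattered U E S \<and> internally_connected E S \<and>
          memdim U S \<le> c * (diam U E)^2)"
proof (intro exI[of _ 12] allI impI)
  fix U E assume "binary_tree U E"
  then obtain r where "rooted_graph U E r"
    and binary: "\<forall>v\<in>U. card {w \<in> U. adj E v w \<and> gdist U E r w = Suc (gdist U E r v)} \<le> 2"
    unfolding binary_tree_def tree_def graph_def rooted_graph_def by blast
  interpret rooted_graph U E r
    by fact
  have "memdim U categories \<le> 12 * (diam U E)\<^sup>2"
    using memdim_categories_le[of 2] binary by (simp add: children_def)
  then show "\<exists>S. S \<subseteq> Pow U \<and> shattered U E S \<and> internally_connected E S \<and>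
      memdim U S \<le> 12 * (diam U E)^2"
    using categories_subset_Pow shattered_categories internally_connected_categories by blast
qed

end
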